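(* Let $\varphi=\frac{1+\sqrt5}{2}$ and, for every integer $k$, let $F_k=\frac{\varphi^k-(-1/\varphi)^k}{\varphi+1/\varphi}$ (so $F_0=0$, $F_1=F_2=1$, $F_{k}=F_{k-1}+F_{k-2}$). Let $b$, $b^+$, $N$ be linear operators on a complex inner product space, with $b^+$ the adjoint of $b$ and $N$ hermitian, satisfying $$bb^+-\varphi\, b^+b=\left(-\tfrac1\varphi\right)^N,\qquad [N,b^+]=b^+,\qquad [N,b]=-b,$$ where $\left(-\frac1\varphi\right)^N$ acts on any eigenvector of $N$ with eigenvalue $k$ as multiplication by $\left(-\frac1\varphi\right)^k$. Suppose there is a vacuum vector $|0\rangle$ with $\langle 0|0\rangle=1$, $b|0\rangle=0$ and $N|0\rangle=0$. For $n\ge 0$ set $|n\rangle=\frac{(b^+)^n}{\sqrt{F_1F_2\cdots F_n}}|0\rangle$. Then for every $n\ge0$: $N|n\rangle=n|n\rangle$, $b^+b|n\rangle=F_n|n\rangle$, $bb^+|n\rangle=F_{n+1}|n\rangle$, the vectors $|n\rangle$ are orthonormal, and the Hamiltonian $H=\frac{\hbar\omega}{2}(b^+b+bb^+)$ satisfies $H|n\rangle=E_n|n\rangle$ with $$E_n=\frac{\hbar\omega}{2}F_{n+2}.$$ In particular $E_{n+1}-E_n=\frac{\hbar\omega}{2}F_{n+1}$ and $\lim_{n\to\infty}E_{n+1}/E_n=\varphi$.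
   Context: $\hbar>0$ and $\omega>0$ are constants. The empty product $F_1\cdots F_0$ equals $1$. *)

theory Defs
  imports Complex_Main
begin

definition phi :: real where
  "phi = (1 + sqrt 5) / 2"

definition Fib :: "int \<Rightarrow> real" where
  "Fib k = (phi powi k - (- 1 / phi) powi k) / (phi + 1 / phi)"

text \<open>A complex inner product space: a complex vector space with scalar multiplication
  sc and an inner product ip, antilinear in the first and linear in the second argument
  (physics convention, matching bra-ket notation).\<close>
definition complex_inner_space ::
  "(complex \<Rightarrow> 'v::ab_group_add \<Rightarrow> 'v) \<Rightarrow> ('v \<Rightarrow> 'v \<Rightarrow> complex) \<Rightarrow> bool" where
  "complex_inner_space sc ip \<longleftrightarrow>
     vector_space sc \<and>
     (\<forall>x y. ip y x = cnj (ip x y)) \<and>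
     (\<forall>x y z. ip x (y + z) = ip x y + ip x z) \<and>
     (\<forall>c x y. ip x (sc c y) = c * ip x y) \<and>
     (\<forall>x. Re (ip x x) \<ge> 0) \<and>
     (\<forall>x. ip x x = 0 \<longrightarrow> x = 0)"

end

theory Submission
  imports Defs
begin

text \<open>The states \<open>(b\<^sup>+)\<^sup>n|0\<rangle>\<close> are eigenvectors of \<open>N\<close> with eigenvalue \<open>n\<close>, so \<open>(-1/\<phi>)\<^sup>N\<close> acts on
  them as \<open>\<psi>\<^sup>n\<close> with \<open>\<psi> = -1/\<phi>\<close>. Feeding the eigenvalue \<open>F\<^sub>n\<close> of \<open>b\<^sup>+b\<close> into the deformed
  commutation relation gives the eigenvalue \<open>\<phi> F\<^sub>n + \<psi>\<^sup>n = F\<^sub>n\<^sub>+\<^sub>1\<close> of \<open>bb\<^sup>+\<close>, and moving one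
  \<open>b\<^sup>+\<close> past the state shows that this is the eigenvalue of \<open>b\<^sup>+b\<close> on the next state. The
  same computation, with \<open>b\<close> adjoint to \<open>b\<^sup>+\<close>, gives the squared norms \<open>F\<^sub>1\<cdots>F\<^sub>n\<close>;
  orthogonality holds because the states are eigenvectors of the hermitian \<open>N\<close> for distinct
  eigenvalues. The energies are then \<open>F\<^sub>n + F\<^sub>n\<^sub>+\<^sub>1 = F\<^sub>n\<^sub>+\<^sub>2\<close>, and their ratios tend to \<open>\<phi>\<close>
  by Binet's formula, since \<open>\<bar>\<psi>/\<phi>\<bar> < 1\<close>.\<close>

lemma phi_gt_one: "phi > 1"
  unfolding phi_def by simp

lemma phi_squared: "phi\<^sup>2 = phi + 1"
  unfolding phi_def by (simp add: power2_eq_square field_simps)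

definition psi :: real where
  "psi = - 1 / phi"

lemma psi_nonzero: "psi \<noteq> 0"
  using phi_gt_one by (simp add: psi_def)

lemma psi_squared: "psi\<^sup>2 = psi + 1"
  using phi_squared phi_gt_one unfolding psi_def by (simp add: power2_eq_square field_simps)

lemma abs_psi_less_one: "\<bar>psi\<bar> < 1"
  using phi_gt_one by (simp add: psi_def)

lemma phi_minus_psi: "phi - psi = sqrt 5"
proof -
  have "1 + sqrt 5 > 0" "sqrt 5 * sqrt 5 = 5"
    by (simp_all add: add_pos_nonneg)
  then show ?thesis
    unfolding psi_def phi_def by (simp add: field_simps)
qed

lemma Fib_Binet: "Fib k = (phi powi k - psi powi k) / sqrt 5"
  unfolding Fib_def phi_minus_psi[symmetric] by (simp add: psi_def)

lemma Fib_of_nat: "Fib (int n) = (phi ^ n - psi ^ n) / sqrt 5"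
  by (simp add: Fib_Binet)

lemma Fib_0: "Fib 0 = 0"
  by (simp add: Fib_Binet)

lemma Fib_add_1: "Fib (k + 1) = phi * Fib k + psi powi k"
proof -
  have "phi powi (k + 1) = phi * phi powi k" "psi powi (k + 1) = psi * psi powi k"
    using phi_gt_one psi_nonzero by (simp_all add: power_int_add_1')
  then have "phi powi (k + 1) - psi powi (k + 1) = phi * (phi powi k - psi powi k) + (phi - psi) * psi powi k"
    by (simp add: algebra_simps)
  then show ?thesis
    by (simp add: Fib_Binet phi_minus_psi field_simps)
qed

lemma Fib_add_2: "Fib (k + 2) = Fib (k + 1) + Fib k"
proof -
  have "x powi (k + 2) = x powi (k + 1) + x powi k" if "x\<^sup>2 = x + 1" "x \<noteq> 0" for x :: real
    using that by (simp add: power_int_add power_int_add_1 algebra_simps)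
  then have "phi powi (k + 2) = phi powi (k + 1) + phi powi k"
    and "psi powi (k + 2) = psi powi (k + 1) + psi powi k"
    using phi_squared psi_squared phi_gt_one psi_nonzero by auto
  then show ?thesis
    by (simp add: Fib_Binet diff_divide_distrib[symmetric] add_divide_distrib[symmetric])
qed

lemma Fib_pos:
  assumes "n \<ge> 1"
  shows "Fib (int n) > 0"
proof -
  have "psi ^ n \<le> \<bar>psi\<bar> ^ n"
    using abs_ge_self[of "psi ^ n"] by (simp add: power_abs)
  also have "\<dots> < 1"
    using abs_psi_less_one assms by (simp add: power_less_one_iff)
  also have "1 \<le> phi ^ n"
    using phi_gt_one by simp
  finally show ?thesis
    by (simp add: Fib_of_nat)
qed

lemma Fib_ratio_tendsto_phi: "(\<lambda>n. Fib (int n + 1) / Fib (int n)) \<longlonglongrightarrow> phi"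
proof -
  define r where "r = psi / phi"
  have "\<bar>r\<bar> < 1"
    using abs_psi_less_one phi_gt_one by (simp add: r_def divide_less_eq)
  then have "(\<lambda>n. (phi - psi * r ^ n) / (1 - r ^ n)) \<longlonglongrightarrow> (phi - psi * 0) / (1 - 0)"
    by (intro tendsto_intros LIMSEQ_power_zero) simp_all
  then have "(\<lambda>n. (phi - psi * r ^ n) / (1 - r ^ n)) \<longlonglongrightarrow> phi"
    by simp
  moreover have "(phi - psi * r ^ n) / (1 - r ^ n) = Fib (int n + 1) / Fib (int n)"
    if "n \<ge> 1" for n
  proof -
    have "phi ^ n - psi ^ n \<noteq> 0"
      using Fib_pos[OF that] by (auto simp: Fib_of_nat)
    then have "(phi - psi * r ^ n) / (1 - r ^ n) = (phi ^ Suc n - psi ^ Suc n) / (phi ^ n - psi ^ n)"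
      using phi_gt_one by (simp add: r_def field_simps)
    then show ?thesis
      using Fib_of_nat[of "Suc n"] by (simp add: Fib_of_nat add.commute)
  qed
  then have "\<forall>\<^sub>F n in sequentially. (phi - psi * r ^ n) / (1 - r ^ n) = Fib (int n + 1) / Fib (int n)"
    by (rule eventually_sequentiallyI)
  ultimately show ?thesis
    by (rule Lim_transform_eventually)
qed

lemma complex_inner_space_scale_left:
  assumes "complex_inner_space sc ip"
  shows "ip (sc c x) y = cnj c * ip x y"
proof -
  have "ip (sc c x) y = cnj (ip y (sc c x))" and "ip y (sc c x) = c * ip y x"
    and "ip y x = cnj (ip x y)"
    using assms unfolding complex_inner_space_def by blast+
  then show ?thesis
    by simp
qed

lemma complex_inner_space_scale_right:
  assumes "complex_inner_space sc ip"
  shows "ip x (sc c y) = c * ip x y"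
  using assms unfolding complex_inner_space_def by blast

lemma hermitian_eigenvectors_orthogonal:
  assumes inner: "complex_inner_space sc ip"
    and hermitian: "\<And>x y. ip (A x) y = ip x (A y)"
    and "A x = sc (of_real \<alpha>) x" "A y = sc (of_real \<beta>) y" "\<alpha> \<noteq> \<beta>"
  shows "ip x y = 0"
proof -
  have "of_real \<alpha> * ip x y = of_real \<beta> * ip x y"
    using hermitian[of x y] assms(3,4)
    by (simp add: complex_inner_space_scale_left[OF inner] complex_inner_space_scale_right[OF inner])
  with \<open>\<alpha> \<noteq> \<beta>\<close> show ?thesis
    by simp
qed

lemma (in vector_space) eigenvector_scale:
  assumes "\<And>a x. T (scale a x) = scale a (T x)" "T x = scale c x"
  shows "T (scale a x) = scale c (scale a x)"
  using assms by (simp add: mult.commute)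

locale fib_oscillator =
  vector_space sc + b: Vector_Spaces.linear sc sc b + bp: Vector_Spaces.linear sc sc bp
    + N: Vector_Spaces.linear sc sc N
  for sc :: "complex \<Rightarrow> 'v::ab_group_add \<Rightarrow> 'v" and b bp N :: "'v \<Rightarrow> 'v" +
  fixes ip :: "'v \<Rightarrow> 'v \<Rightarrow> complex"
    and Q :: "'v \<Rightarrow> 'v"
    and vac :: 'v
  assumes inner: "complex_inner_space sc ip"
    and adjoint: "\<And>x y. ip (b x) y = ip x (bp y)"
    and hermitian_N: "\<And>x y. ip (N x) y = ip x (N y)"
    and Q_eigen: "\<And>k x. N x = sc (of_int k) x \<Longrightarrow> Q x = sc (of_real (psi powi k)) x"
    and deformed_commutator: "\<And>x. b (bp x) - sc (of_real phi) (bp (b x)) = Q x"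
    and N_bp_commutator: "\<And>x. N (bp x) - bp (N x) = bp x"
    and vac_norm: "ip vac vac = 1"
    and b_vac: "b vac = 0"
    and N_vac: "N vac = 0"
begin

definition state :: "nat \<Rightarrow> 'v" where
  "state n = (bp ^^ n) vac"

lemma state_0: "state 0 = vac"
  by (simp add: state_def)

lemma state_Suc: "state (Suc n) = bp (state n)"
  by (simp add: state_def)

lemma N_state: "N (state n) = sc (of_nat n) (state n)"
proof (induction n)
  case 0
  show ?case
    using N_vac by (simp add: state_0)
next
  case (Suc n)
  have "N (bp (state n)) = bp (N (state n)) + bp (state n)"
    using N_bp_commutator[of "state n"] by (simp add: algebra_simps)
  also have "\<dots> = sc (of_nat n + 1) (bp (state n))"
    using Suc by (simp add: bp.scale scale_left_distrib)
  finally show ?case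
    by (simp add: state_Suc)
qed

lemma Q_state: "Q (state n) = sc (of_real (psi ^ n)) (state n)"
  using Q_eigen[where k = "int n"] N_state by simp

lemma b_bp_state_if_bp_b_state:
  assumes "bp (b (state n)) = sc (of_real (Fib (int n))) (state n)"
  shows "b (bp (state n)) = sc (of_real (Fib (int n + 1))) (state n)"
proof -
  have "b (bp (state n)) = sc (of_real phi) (bp (b (state n))) + Q (state n)"
    using deformed_commutator[of "state n"] by (simp add: algebra_simps)
  also have "\<dots> = sc (of_real (phi * Fib (int n) + psi ^ n)) (state n)"
    by (simp add: assms Q_state scale_left_distrib)
  finally show ?thesis
    by (simp add: Fib_add_1)
qed

lemma bp_b_state: "bp (b (state n)) = sc (of_real (Fib (int n))) (state n)"
proof (induction n)
  case 0
  show ?case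
    using b_vac bp.zero by (simp add: state_0 Fib_0)
next
  case (Suc n)
  then show ?case
    using b_bp_state_if_bp_b_state by (simp add: state_Suc bp.scale add.commute)
qed

lemma b_bp_state: "b (bp (state n)) = sc (of_real (Fib (int n + 1))) (state n)"
  by (rule b_bp_state_if_bp_b_state[OF bp_b_state])

lemma inner_state_self: "ip (state n) (state n) = of_real (\<Prod>i=1..n. Fib (int i))"
proof (induction n)
  case 0
  show ?case
    by (simp add: state_0 vac_norm)
next
  case (Suc n)
  have "ip (state (Suc n)) (state (Suc n)) = ip (b (bp (state n))) (state n)"
    by (simp add: state_Suc adjoint)
  also have "\<dots> = of_real (Fib (int (Suc n)) * (\<Prod>i=1..n. Fib (int i)))"
    using Suc by (simp add: b_bp_state complex_inner_space_scale_left[OF inner] add.commute)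
  finally show ?case
    by (simp add: prod.nat_ivl_Suc')
qed

lemma inner_state_orthogonal:
  assumes "m \<noteq> n"
  shows "ip (state m) (state n) = 0"
proof -
  have m: "N (state m) = sc (of_real (real m)) (state m)"
    and n: "N (state n) = sc (of_real (real n)) (state n)"
    by (simp_all add: N_state)
  show ?thesis
    by (rule hermitian_eigenvectors_orthogonal[OF inner _ m n]) (use hermitian_N assms in simp_all)
qed

definition ket :: "nat \<Rightarrow> 'v" where
  "ket n = sc (of_real (1 / sqrt (\<Prod>i=1..n. Fib (int i)))) (state n)"

lemma N_ket: "N (ket n) = sc (of_nat n) (ket n)"
  unfolding ket_def by (rule eigenvector_scale[OF N.scale N_state])

lemma bp_b_ket: "bp (b (ket n)) = sc (of_real (Fib (int n))) (ket n)"
  unfolding ket_def by (rule eigenvector_scale[where T = "\<lambda>x. bp (b x)", OF _ bp_b_state]) (simp add: b.scale bp.scale)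

lemma b_bp_ket: "b (bp (ket n)) = sc (of_real (Fib (int n + 1))) (ket n)"
  unfolding ket_def by (rule eigenvector_scale[where T = "\<lambda>x. b (bp x)", OF _ b_bp_state]) (simp add: b.scale bp.scale)

lemma hamiltonian_ket: "bp (b (ket n)) + b (bp (ket n)) = sc (of_real (Fib (int n + 2))) (ket n)"
  by (simp add: bp_b_ket b_bp_ket Fib_add_2 scale_left_distrib)

lemma inner_ket: "ip (ket m) (ket n) = (if m = n then 1 else 0)"
proof (cases "m = n")
  case True
  define P where "P = (\<Prod>i=1..n. Fib (int i))"
  have "P > 0"
    unfolding P_def by (rule prod_pos) (simp add: Fib_pos)
  have "ip (ket n) (ket n) = of_real (1 / sqrt P) * of_real (1 / sqrt P) * of_real P"
    unfolding ket_def P_def[symmetric]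
    by (simp add: complex_inner_space_scale_left[OF inner] complex_inner_space_scale_right[OF inner]
        inner_state_self[of n, folded P_def])
  also have "\<dots> = of_real (1 / sqrt P * (1 / sqrt P) * P)"
    by (simp only: of_real_mult)
  also have "\<dots> = 1"
    using \<open>P > 0\<close> by simp
  finally show ?thesis
    using True by simp
next
  case False
  then show ?thesis
    by (simp add: ket_def inner_state_orthogonal complex_inner_space_scale_left[OF inner]
        complex_inner_space_scale_right[OF inner])
qed

end

theorem mainTheorem1:
  fixes sc :: "complex \<Rightarrow> 'v::ab_group_add \<Rightarrow> 'v"
    and ip :: "'v \<Rightarrow> 'v \<Rightarrow> complex"
    and b bp N Q :: "'v \<Rightarrow> 'v"
    and vac :: 'v
    and hbar \<omega> :: real
  assumes inner: "complex_inner_space sc ip"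
    and lin_b: "Vector_Spaces.linear sc sc b"
    and lin_bp: "Vector_Spaces.linear sc sc bp"
    and lin_N: "Vector_Spaces.linear sc sc N"
    and lin_Q: "Vector_Spaces.linear sc sc Q"
    and adj: "\<forall>x y. ip (b x) y = ip x (bp y)"
    and herm: "\<forall>x y. ip (N x) y = ip x (N y)"
    and Q_eig: "\<forall>(k::int) x. N x = sc (of_int k) x \<longrightarrow> Q x = sc (complex_of_real ((- 1 / phi) powi k)) x"
    and rel: "\<forall>x. b (bp x) - sc (complex_of_real phi) (bp (b x)) = Q x"
    and comm_bp: "\<forall>x. N (bp x) - bp (N x) = bp x"
    and comm_b: "\<forall>x. N (b x) - b (N x) = - b x"
    and vac_norm: "ip vac vac = 1"
    and vac_b: "b vac = 0"
    and vac_N: "N vac = 0"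
    and hbar_pos: "hbar > 0"
    and omega_pos: "\<omega> > 0"
  defines "ket \<equiv> \<lambda>n::nat. sc (complex_of_real (1 / sqrt (\<Prod>i=1..n. Fib (int i)))) ((bp ^^ n) vac)"
    and "H \<equiv> \<lambda>x. sc (complex_of_real (hbar * \<omega> / 2)) (bp (b x) + b (bp x))"
    and "E \<equiv> \<lambda>n::nat. hbar * \<omega> / 2 * Fib (int n + 2)"
  shows "(\<forall>n. N (ket n) = sc (of_nat n) (ket n))
       \<and> (\<forall>n. bp (b (ket n)) = sc (complex_of_real (Fib (int n))) (ket n))
       \<and> (\<forall>n. b (bp (ket n)) = sc (complex_of_real (Fib (int n + 1))) (ket n))
       \<and> (\<forall>m n. ip (ket m) (ket n) = (if m = n then 1 else 0))
       \<and> (\<forall>n. H (ket n) = sc (complex_of_real (E n)) (ket n))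
       \<and> (\<forall>n. E (n + 1) - E n = hbar * \<omega> / 2 * Fib (int n + 1))
       \<and> ((\<lambda>n. E (n + 1) / E n) \<longlonglongrightarrow> phi)"
proof -
  interpret osc: fib_oscillator sc b bp N ip Q vac
  proof (rule fib_oscillator.intro)
    show "vector_space sc"
      using inner by (simp add: complex_inner_space_def)
    show "fib_oscillator_axioms sc b bp N ip Q vac"
      using inner adj herm Q_eig rel comm_bp vac_norm vac_b vac_N
      by (simp add: fib_oscillator_axioms_def psi_def)
  qed (fact lin_b lin_bp lin_N)+
  have ket_eq: "ket = osc.ket"
    by (simp add: ket_def osc.ket_def osc.state_def fun_eq_iff)
  have "H (ket n) = sc (of_real (E n)) (ket n)" for n
    by (simp add: H_def E_def ket_eq osc.hamiltonian_ket mult.commute)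
  moreover have "E (n + 1) - E n = hbar * \<omega> / 2 * Fib (int n + 1)" for n
    using Fib_add_2[of "int n + 1"] by (simp add: E_def algebra_simps)
  moreover have "(\<lambda>n. E (n + 1) / E n) \<longlonglongrightarrow> phi"
  proof -
    have "E (n + 1) / E n = Fib (int (n + 2) + 1) / Fib (int (n + 2))" for n
      using hbar_pos omega_pos by (simp add: E_def ac_simps)
    then show ?thesis
      using LIMSEQ_ignore_initial_segment[OF Fib_ratio_tendsto_phi, of 2] by simp
  qed
  ultimately show ?thesis
    unfolding ket_eq using osc.N_ket osc.bp_b_ket osc.b_bp_ket osc.inner_ket by blast
qed

end
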